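(* Let $f\in\mathcal{A}$. If $\left|\left(\frac{f(z)}{z}\right)'\right|<\frac12$ for all $z\in\Delta\setminus\{0\}$, then $f\in\Omega$. Moreover the constant $\tfrac12$ cannot be replaced by any larger constant: for every $\lambda>\tfrac12$, the function $\widehat f_\lambda(z)=z+\lambda z^2$ satisfies $\left(\widehat f_\lambda(z)/z\right)'=\lambda$ but $\widehat f_\lambda\notin\Omega$.
   Context: $\Delta=\{z\in\mathbb{C}:|z|<1\}$. $\mathcal{A}$ is the class of functions $f$ analytic in $\Delta$ with $f(0)=0$, $f'(0)=1$. $\Omega$ is the class of $f\in\mathcal{A}$ with $|zf'(z)-f(z)|<\tfrac12$ for all $z\in\Delta$. *)

theory Defs
  imports "HOL-Complex_Analysis.Complex_Analysis"
begin

definition classA :: "(complex \<Rightarrow> complex) set" where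
  "classA = {f. f analytic_on ball 0 1 \<and> f 0 = 0 \<and> deriv f 0 = 1}"

definition classOmega :: "(complex \<Rightarrow> complex) set" where
  "classOmega = {f. f \<in> classA \<and>
      (\<forall>z\<in>ball 0 1. cmod (z * deriv f z - f z) < 1/2)}"

end

theory Submission
  imports Defs
begin

(* For z \<noteq> 0 the quotient rule gives z^2 (f(z)/z)' = z f'(z) - f(z), so on the
   unit disk |z f'(z) - f(z)| = |z|^2 |(f(z)/z)'| < 1/2. For f(z) = z + c z^2 one has
   (f(z)/z)' = c and z f'(z) - f(z) = c z^2, whose modulus reaches 1/2 at the real point
   z = 1/sqrt(2|c|) of the disk as soon as |c| > 1/2. *)

lemma deriv_divide_ident:
  assumes "f field_differentiable at z" and "z \<noteq> 0"
  shows "deriv (\<lambda>w. f w / w) z = (z * deriv f z - f z) / z\<^sup>2"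
proof -
  have "(f has_field_derivative deriv f z) (at z)"
    using assms(1) by (simp add: DERIV_deriv_iff_field_differentiable)
  then have "((\<lambda>w. f w / w) has_field_derivative (deriv f z * z - f z * 1) / (z * z)) (at z)"
    using assms(2) by (rule DERIV_divide[OF _ DERIV_ident])
  then show ?thesis
    by (simp add: DERIV_imp_deriv power2_eq_square mult.commute)
qed

lemma classOmega_if_deriv_quotient_bound:
  assumes f: "f \<in> classA"
    and bound: "\<forall>z \<in> ball 0 1 - {0}. cmod (deriv (\<lambda>w. f w / w) z) < 1/2"
  shows "f \<in> classOmega"
proof -
  have "cmod (z * deriv f z - f z) < 1/2" if z: "z \<in> ball 0 1" for z
  proof (cases "z = 0")
    case True
    then show ?thesis
      using f by (simp add: classA_def)
  next
    case False
    have "f field_differentiable at z"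
      using f z by (auto simp: classA_def intro: analytic_on_imp_differentiable_at)
    then have "deriv (\<lambda>w. f w / w) z = (z * deriv f z - f z) / z\<^sup>2"
      using False by (rule deriv_divide_ident)
    moreover have "cmod (deriv (\<lambda>w. f w / w) z) < 1/2"
      using bound z False by blast
    ultimately have "cmod ((z * deriv f z - f z) / z\<^sup>2) < 1/2"
      by simp
    then have "cmod (z * deriv f z - f z) < 1/2 * (cmod z)\<^sup>2"
      using False by (simp add: norm_divide norm_power field_simps)
    also have "\<dots> \<le> 1/2"
      using z by (simp add: power_le_one)
    finally show ?thesis .
  qed
  then show ?thesis
    using f by (auto simp: classOmega_def)
qed

lemma deriv_quadratic: "deriv (\<lambda>z. z + c * z\<^sup>2) z = 1 + 2 * c * z"
  by (rule DERIV_imp_deriv) (auto intro!: derivative_eq_intros)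

lemma quadratic_in_classA: "(\<lambda>z. z + c * z\<^sup>2) \<in> classA"
  by (auto simp: classA_def deriv_quadratic intro!: analytic_intros)

lemma deriv_quadratic_quotient:
  assumes "z \<noteq> 0"
  shows "deriv (\<lambda>w. (w + c * w\<^sup>2) / w) z = c"
  using assms
  by (simp add: deriv_divide_ident field_differentiable_add field_differentiable_mult
      field_differentiable_power field_differentiable_ident field_differentiable_const
      deriv_quadratic field_simps power2_eq_square)

lemma quadratic_notin_classOmega:
  assumes c: "cmod c > 1/2"
  shows "(\<lambda>z. z + c * z\<^sup>2) \<notin> classOmega"
proof
  assume "(\<lambda>z. z + c * z\<^sup>2) \<in> classOmega"
  then have Omega: "\<forall>z\<in>ball 0 1. cmod (z * deriv (\<lambda>z. z + c * z\<^sup>2) z - (z + c * z\<^sup>2)) < 1/2"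
    unfolding classOmega_def by blast
  have bound: "cmod (c * z\<^sup>2) < 1/2" if "z \<in> ball 0 1" for z
  proof -
    have "z * deriv (\<lambda>z. z + c * z\<^sup>2) z - (z + c * z\<^sup>2) = c * z\<^sup>2"
      by (simp only: deriv_quadratic) (simp add: algebra_simps power2_eq_square)
    then show ?thesis
      using Omega that by metis
  qed
  define r where "r = sqrt (1 / (2 * cmod c))"
  have r2: "r\<^sup>2 = 1 / (2 * cmod c)"
    using c by (simp add: r_def field_simps)
  have "r < 1"
    using c by (simp add: r_def divide_less_eq)
  then have "cmod (c * (complex_of_real r)\<^sup>2) < 1/2"
    by (intro bound) (simp add: r_def)
  moreover have "cmod (c * (complex_of_real r)\<^sup>2) = 1/2"
    using c r2 by (auto simp: norm_mult norm_power)
  ultimately show False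
    by simp
qed

theorem lemma4p1:
  shows "(\<forall>f \<in> classA.
            (\<forall>z \<in> ball 0 1 - {0}. cmod (deriv (\<lambda>w. f w / w) z) < 1/2)
            \<longrightarrow> f \<in> classOmega)
       \<and> (\<forall>lam::real. lam > 1/2 \<longrightarrow>
            (\<lambda>z. z + complex_of_real lam * z^2) \<in> classA
          \<and> (\<forall>z \<in> ball 0 1 - {0}.
               deriv (\<lambda>w. (w + complex_of_real lam * w^2) / w) z = complex_of_real lam)
          \<and> (\<lambda>z. z + complex_of_real lam * z^2) \<notin> classOmega)"
  using classOmega_if_deriv_quotient_bound quadratic_in_classA deriv_quadratic_quotient
    quadratic_notin_classOmega by auto

end
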